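(* Let $(\Lambda,\mathcal{G}_\Lambda)$ be a labeled graph all of whose vertex groups are directly-indecomposable cyclic groups, and let $u$ be a CP element of $W(\Lambda)$. Then the centralizer of $u$ in $W(\Lambda)$ equals $W(\mathrm{st}(u))$, i.e. $C_{W(\Lambda)}(u)=W(\mathrm{st}(u))$.
   Context: A labeled graph $(\Lambda,\mathcal{G}_\Lambda)$ consists of a nonempty finite simplicial graph $\Lambda$ with vertex set $V_\Lambda$ and a family $\mathcal{G}_\Lambda=\{G_v\}_{v\in V_\Lambda}$ of nontrivial groups. Its graph product $W(\Lambda)=W(\Lambda,\mathcal{G}_\Lambda)$ is the quotient of the free product $\ast_{v\in V_\Lambda}G_v$ by the relations $gh=hg$ for all $g\in G_v$, $h\in G_{v'}$ with $v,v'$ adjacent in $\Lambda$. For a full subgraph $\Theta$ of $\Lambda$, $W(\Theta)$ denotes the subgroup of $W(\Lambda)$ generated by the images of the $G_v$, $v\in V_\Theta$. A cyclic group is primary if it has prime-power order, and directly-indecomposable if it is infinite or primary. When all vertex groups are cyclic, a generator of each $G_v$ is fixed and also denoted $v$; words are words in the alphabet $V_\Lambda^{\pm1}$, and a word is reduced if no shorter word represents the same element of $W(\Lambda)$. For $g\in W(\Lambda)$, $\mathrm{supp}(g)$ is the set of vertices $v$ such that $v$ or $v^{-1}$ appears in some reduced word representing $g$. An element $u\in W(\Lambda)$ is a CP element if $u\in W(\Delta)$ for some complete subgraph $\Delta$ of $\Lambda$. For such $u$, $\mathrm{st}(u)$ denotes the full subgraph of $\Lambda$ spanned by $\mathrm{supp}(u)$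 together with all vertices adjacent to every vertex of $\mathrm{supp}(u)$. *)

theory Defs
  imports "HOL-Algebra.Group" "HOL-Computational_Algebra.Primes"
begin

text \<open>The vertex group at v is cyclic generated by v, of order
  ord v, where ord v = 0 encodes the infinite cyclic group.
  A letter (v, True) is the generator v, (v, False) is its inverse.\<close>

type_synonym 'v letter = "'v \<times> bool"

definition labeled_graph :: "'v set \<Rightarrow> ('v \<Rightarrow> 'v \<Rightarrow> bool) \<Rightarrow> bool" where
  "labeled_graph V E \<longleftrightarrow> finite V \<and> V \<noteq> {} \<and>
     (\<forall>a b. E a b \<longrightarrow> a \<in> V \<and> b \<in> V) \<and>
     (\<forall>a b. E a b \<longrightarrow> E b a) \<and> (\<forall>a. \<not> E a a)"

text \<open>Cyclic group of order n (0 = infinite) is nontrivial and directly-indecomposable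
  (infinite or of prime-power order).\<close>
definition dir_indec_cyclic_order :: "nat \<Rightarrow> bool" where
  "dir_indec_cyclic_order n \<longleftrightarrow> n = 0 \<or> (\<exists>p k. prime p \<and> k \<ge> 1 \<and> n = p ^ k)"

definition letters :: "'v set \<Rightarrow> 'v letter set" where
  "letters S = S \<times> UNIV"

inductive gp_eq :: "'v set \<Rightarrow> ('v \<Rightarrow> 'v \<Rightarrow> bool) \<Rightarrow> ('v \<Rightarrow> nat)
    \<Rightarrow> 'v letter list \<Rightarrow> 'v letter list \<Rightarrow> bool"
  for V E ord where
  gp_refl: "w \<in> lists (letters V) \<Longrightarrow> gp_eq V E ord w w"
| gp_sym: "gp_eq V E ord w w' \<Longrightarrow> gp_eq V E ord w' w"
| gp_trans: "gp_eq V E ord w w' \<Longrightarrow> gp_eq V E ord w' w'' \<Longrightarrow> gp_eq V E ord w w''"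
| gp_ctxt: "gp_eq V E ord w w' \<Longrightarrow> a \<in> lists (letters V) \<Longrightarrow> b \<in> lists (letters V)
     \<Longrightarrow> gp_eq V E ord (a @ w @ b) (a @ w' @ b)"
| gp_cancel: "v \<in> V \<Longrightarrow> gp_eq V E ord [(v, s), (v, \<not> s)] []"
| gp_order: "v \<in> V \<Longrightarrow> ord v > 0 \<Longrightarrow> gp_eq V E ord (replicate (ord v) (v, True)) []"
| gp_comm: "E v v' \<Longrightarrow> gp_eq V E ord [(v, s), (v', s')] [(v', s'), (v, s)]"

definition gp_rel :: "'v set \<Rightarrow> ('v \<Rightarrow> 'v \<Rightarrow> bool) \<Rightarrow> ('v \<Rightarrow> nat) \<Rightarrow> 'v letter list rel" where
  "gp_rel V E ord = {(w, w'). gp_eq V E ord w w'}"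

definition gp_cls :: "'v set \<Rightarrow> ('v \<Rightarrow> 'v \<Rightarrow> bool) \<Rightarrow> ('v \<Rightarrow> nat)
    \<Rightarrow> 'v letter list \<Rightarrow> 'v letter list set" where
  "gp_cls V E ord w = gp_rel V E ord `` {w}"

definition graph_product :: "'v set \<Rightarrow> ('v \<Rightarrow> 'v \<Rightarrow> bool) \<Rightarrow> ('v \<Rightarrow> nat)
    \<Rightarrow> 'v letter list set monoid" where
  "graph_product V E ord =
     \<lparr> carrier = lists (letters V) // gp_rel V E ord,
       monoid.mult = (\<lambda>X Y. \<Union>x\<in>X. \<Union>y\<in>Y. gp_cls V E ord (x @ y)),
       monoid.one = gp_cls V E ord [] \<rparr>"

text \<open>W(\<Theta>) for a set of vertices \<Theta> (full subgraph spanned by \<Theta>).\<close>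
definition gp_sub :: "'v set \<Rightarrow> ('v \<Rightarrow> 'v \<Rightarrow> bool) \<Rightarrow> ('v \<Rightarrow> nat) \<Rightarrow> 'v set
    \<Rightarrow> 'v letter list set set" where
  "gp_sub V E ord \<Theta> = gp_cls V E ord ` lists (letters \<Theta>)"

definition reduced_word :: "'v set \<Rightarrow> ('v \<Rightarrow> 'v \<Rightarrow> bool) \<Rightarrow> ('v \<Rightarrow> nat)
    \<Rightarrow> 'v letter list \<Rightarrow> bool" where
  "reduced_word V E ord w \<longleftrightarrow> w \<in> lists (letters V) \<and>
     (\<forall>w'. gp_eq V E ord w w' \<longrightarrow> length w \<le> length w')"

definition gp_supp :: "'v set \<Rightarrow> ('v \<Rightarrow> 'v \<Rightarrow> bool) \<Rightarrow> ('v \<Rightarrow> nat)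
    \<Rightarrow> 'v letter list set \<Rightarrow> 'v set" where
  "gp_supp V E ord g = {v. \<exists>w. gp_cls V E ord w = g \<and> reduced_word V E ord w \<and> v \<in> fst ` set w}"

definition complete_subgraph :: "'v set \<Rightarrow> ('v \<Rightarrow> 'v \<Rightarrow> bool) \<Rightarrow> 'v set \<Rightarrow> bool" where
  "complete_subgraph V E \<Delta> \<longleftrightarrow> \<Delta> \<subseteq> V \<and> (\<forall>a\<in>\<Delta>. \<forall>b\<in>\<Delta>. a \<noteq> b \<longrightarrow> E a b)"

definition CP_element :: "'v set \<Rightarrow> ('v \<Rightarrow> 'v \<Rightarrow> bool) \<Rightarrow> ('v \<Rightarrow> nat)
    \<Rightarrow> 'v letter list set \<Rightarrow> bool" where
  "CP_element V E ord u \<longleftrightarrow> (\<exists>\<Delta>. complete_subgraph V E \<Delta> \<and> u \<in> gp_sub V E ord \<Delta>)"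

definition gp_st :: "'v set \<Rightarrow> ('v \<Rightarrow> 'v \<Rightarrow> bool) \<Rightarrow> ('v \<Rightarrow> nat)
    \<Rightarrow> 'v letter list set \<Rightarrow> 'v set" where
  "gp_st V E ord u = gp_supp V E ord u \<union>
     {v \<in> V. \<forall>s\<in>gp_supp V E ord u. E v s}"

definition centralizer :: "('a, 'b) monoid_scheme \<Rightarrow> 'a \<Rightarrow> 'a set" where
  "centralizer G u = {g \<in> carrier G. g \<otimes>\<^bsub>G\<^esub> u = u \<otimes>\<^bsub>G\<^esub> g}"

end

theory Submission
  imports Defs
begin

(* Elements of W(Lambda) are congruence classes of words in the letters v and v^-1. We solve the
   word problem by a normal form: syllable sequences [(v1,k1),...] standing for v1^k1 ... vn^kn
   that are "normal" (exponents nonzero modulo the vertex order, no two syllables on the same vertex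
   can be shuffled together). Words act letter by letter on normal sequences; the action respects
   the defining relations up to shuffling adjacent syllables on adjacent vertices (act_respects_weq)
   and the expanded result represents the word (expand_act). Shuffling preserves vertex sets, so the
   support of an element is the vertex set of its normal form (supp_normal).

   The heart of the proof is commuting_sequence_in_star: if the normal form U of u has a clique A as
   vertex set and a normal sequence N commutes with U, then all vertices of N lie in
   st(A) = A together with the vertices adjacent to all of A. Syllables of N over st(A) that can be
   shuffled to an end of N commute with U and are cancelled; once none is left, N.U and U.N are both
   normal and shuffle-equivalent, which forces N to be empty. Conversely words over st(A) commute
   with words over A. Since the support of a CP element is a clique, the theorem follows
   (centralizer_clique_normal). The argument works for arbitrary cyclic vertex groups. *)

locale graph_product_words =
  fixes V :: "'v set" and E :: "'v \<Rightarrow> 'v \<Rightarrow> bool" and od :: "'v \<Rightarrow> nat"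
  assumes E_sym: "E a b \<Longrightarrow> E b a" and E_irrefl: "\<not> E a a"
    and E_vertices: "E a b \<Longrightarrow> a \<in> V \<and> b \<in> V"
begin

abbreviation weq :: "'v letter list \<Rightarrow> 'v letter list \<Rightarrow> bool" where
  "weq \<equiv> gp_eq V E od"

abbreviation words :: "'v letter list set" where
  "words \<equiv> lists (letters V)"

lemma weq_words: "weq w w' \<Longrightarrow> w \<in> words \<and> w' \<in> words"
  by (induction rule: gp_eq.induct) (auto simp: letters_def dest: E_vertices)

lemmas weq_refl = gp_refl[of _ V E od]
lemmas weq_sym = gp_sym[of V E od]
lemmas weq_trans[trans] = gp_trans[of V E od]

lemma weq_append: "weq a a' \<Longrightarrow> weq b b' \<Longrightarrow> weq (a @ b) (a' @ b')"
proof -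
  assume a: "weq a a'" and b: "weq b b'"
  have "weq ([] @ a @ b) ([] @ a' @ b)" using a b weq_words by (intro gp_ctxt) auto
  then have "weq (a @ b) (a' @ b @ [])" by simp
  also have "weq (a' @ b @ []) (a' @ b' @ [])" using a b weq_words by (intro gp_ctxt) auto
  finally show ?thesis by simp
qed

lemma lists_letters_iff: "w \<in> lists (letters T) \<longleftrightarrow> fst ` set w \<subseteq> T"
  by (auto simp: letters_def)

lemma weq_append_left: "weq b b' \<Longrightarrow> a \<in> words \<Longrightarrow> weq (a @ b) (a @ b')"
  using weq_append weq_refl by blast

lemma weq_append_right: "weq a a' \<Longrightarrow> b \<in> words \<Longrightarrow> weq (a @ b) (a' @ b)"
  using weq_append weq_refl by blast

text \<open>Formal inverses: every word has a two-sided inverse, so the congruence is cancellative.\<close>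

definition word_inv :: "'v letter list \<Rightarrow> 'v letter list" where
  "word_inv X = rev (map (\<lambda>(v, b). (v, \<not> b)) X)"

lemma word_inv_words: "X \<in> words \<Longrightarrow> word_inv X \<in> words"
  by (auto simp: word_inv_def letters_def)

lemma word_inv_inv: "word_inv (word_inv X) = X"
  by (induction X) (auto simp: word_inv_def)

lemma word_inv_right: "X \<in> words \<Longrightarrow> weq (X @ word_inv X) []"
proof (induction X)
  case Nil then show ?case by (simp add: word_inv_def weq_refl)
next
  case (Cons x X)
  let ?x' = "(fst x, \<not> snd x)"
  have "weq ([x] @ (X @ word_inv X) @ [?x']) ([x] @ [] @ [?x'])"
    using Cons by (intro gp_ctxt) (auto simp: letters_def)
  also have "weq ([x] @ [] @ [?x']) []"
    using Cons gp_cancel[where v = "fst x" and s = "snd x"] by (auto simp: letters_def)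
  finally show ?case by (cases x) (simp add: word_inv_def)
qed

lemma word_inv_left: "X \<in> words \<Longrightarrow> weq (word_inv X @ X) []"
  using word_inv_right[of "word_inv X"] word_inv_words word_inv_inv by metis

lemma weq_cancel_left: "weq (X @ Y) (X @ Z) \<Longrightarrow> weq Y Z"
proof -
  assume h: "weq (X @ Y) (X @ Z)"
  then have "X @ Y \<in> words" "X @ Z \<in> words" using weq_words by blast+
  then have X: "X \<in> words" and Y: "Y \<in> words" and Z: "Z \<in> words" by auto
  have "weq Y ((word_inv X @ X) @ Y)"
    using weq_append_right[OF weq_sym[OF word_inv_left[OF X]] Y] by simp
  also have "weq ((word_inv X @ X) @ Y) (word_inv X @ (X @ Z))"
    using weq_append_left[OF h word_inv_words[OF X]] by simp
  also have "weq (word_inv X @ (X @ Z)) Z"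
    using weq_append_right[OF word_inv_left[OF X] Z] by simp
  finally show ?thesis .
qed

lemma weq_cancel_right: "weq (Y @ X) (Z @ X) \<Longrightarrow> weq Y Z"
proof -
  assume h: "weq (Y @ X) (Z @ X)"
  then have "Y @ X \<in> words" "Z @ X \<in> words" using weq_words by blast+
  then have X: "X \<in> words" and Y: "Y \<in> words" and Z: "Z \<in> words" by auto
  have "weq Y (Y @ (X @ word_inv X))"
    using weq_append_left[OF weq_sym[OF word_inv_right[OF X]] Y] by simp
  also have "weq (Y @ (X @ word_inv X)) ((Z @ X) @ word_inv X)"
    using weq_append_right[OF h word_inv_words[OF X]] by simp
  also have "weq ((Z @ X) @ word_inv X) Z"
    using weq_append_left[OF word_inv_right[OF X] Z] by simp
  finally show ?thesis .
qed

definition letters_commute :: "'v letter \<Rightarrow> 'v letter \<Rightarrow> bool" where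
  "letters_commute x y \<longleftrightarrow> weq [x, y] [y, x]"

lemma letters_commute_adjacent: "E (fst x) (fst y) \<Longrightarrow> letters_commute x y"
  unfolding letters_commute_def by (cases x, cases y) (simp add: gp_comm)

lemma letters_commute_same: "fst x \<in> V \<Longrightarrow> fst x = fst y \<Longrightarrow> letters_commute x y"
proof (cases "snd x = snd y")
  case True
  assume "fst x \<in> V" "fst x = fst y"
  then show ?thesis using True weq_refl
    by (cases x, cases y) (auto simp: letters_commute_def letters_def)
next
  case False
  assume v: "fst x \<in> V" "fst x = fst y"
  have "weq [x, y] []" "weq [y, x] []"
    using gp_cancel[OF v(1), where s = "snd x"] gp_cancel[OF v(1), where s = "snd y"] v(2) False
    by (cases x; cases y; auto)+
  then show ?thesis unfolding letters_commute_def using weq_trans weq_sym by blast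
qed

lemma commute_letter_word:
  "x \<in> letters V \<Longrightarrow> Y \<in> words \<Longrightarrow> \<forall>y\<in>set Y. letters_commute x y \<Longrightarrow> weq (x # Y) (Y @ [x])"
proof (induction Y)
  case Nil then show ?case by (simp add: weq_refl)
next
  case (Cons y Y)
  have "weq (x # y # Y) (y # x # Y)"
    using Cons weq_append_right[of "[x, y]" "[y, x]" Y] by (simp add: letters_commute_def)
  also have "weq (y # x # Y) (y # Y @ [x])"
    using Cons weq_append_left[of "x # Y" "Y @ [x]" "[y]"] by (simp add: letters_def)
  finally show ?case by simp
qed

lemma commute_words:
  "X \<in> words \<Longrightarrow> Y \<in> words \<Longrightarrow> \<forall>x\<in>set X. \<forall>y\<in>set Y. letters_commute x y \<Longrightarrow> weq (X @ Y) (Y @ X)"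
proof (induction X)
  case Nil then show ?case by (simp add: weq_refl)
next
  case (Cons x X)
  have "weq (x # X @ Y) (x # Y @ X)"
    using Cons weq_append_left[of "X @ Y" "Y @ X" "[x]"] by simp
  also have "weq (x # Y @ X) (Y @ x # X)"
    using Cons weq_append_right[OF commute_letter_word, of x Y X] by simp
  finally show ?case by simp
qed

text \<open>Deleting all letters outside a vertex set T respects the congruence (it is the retraction
  onto W(T)). Consequently a reduced word equal to a word over T only uses letters from T.\<close>

definition restrict_word :: "'v set \<Rightarrow> 'v letter list \<Rightarrow> 'v letter list" where
  "restrict_word T w = filter (\<lambda>x. fst x \<in> T) w"

lemma weq_restrict: "weq w w' \<Longrightarrow> weq (restrict_word T w) (restrict_word T w')"
proof (induction rule: gp_eq.induct)
  case (gp_refl w) then show ?case by (auto simp: restrict_word_def intro: weq_refl)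
next
  case (gp_sym w w') then show ?case using weq_sym by blast
next
  case (gp_trans w w' w'') then show ?case using weq_trans by blast
next
  case (gp_ctxt w w' a b) then show ?case
    by (auto simp: restrict_word_def intro!: gp_eq.gp_ctxt)
next
  case (gp_cancel v s) then show ?case by (auto simp: restrict_word_def intro: gp_eq.gp_cancel weq_refl)
next
  case (gp_order v) then show ?case
    by (auto simp: restrict_word_def filter_replicate intro: gp_eq.gp_order weq_refl)
next
  case (gp_comm v v' s s') then show ?case
    using E_vertices[OF gp_comm] by (auto simp: restrict_word_def letters_def intro: gp_eq.gp_comm weq_refl)
qed

lemma reduced_word_vertices:
  assumes "reduced_word V E od w" and "weq w x" and "x \<in> lists (letters T)"
  shows "fst ` set w \<subseteq> T"
proof -
  have "restrict_word T x = x" using assms(3) by (auto simp: restrict_word_def letters_def intro!: filter_True)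
  then have "weq w (restrict_word T w)"
    using weq_restrict[OF assms(2), of T] assms(2) weq_sym weq_trans by metis
  then have "length w \<le> length (restrict_word T w)" using assms(1) by (auto simp: reduced_word_def)
  then show ?thesis unfolding restrict_word_def using length_filter_less[of _ w "\<lambda>x. fst x \<in> T"]
    by force
qed

text \<open>A syllable (v, k) stands for the power v^k; a sequence of syllables
  stands for the product of its syllables.\<close>

abbreviation verts :: "('v \<times> 'b) list \<Rightarrow> 'v set" where
  "verts w \<equiv> fst ` set w"

definition vorder :: "'v \<Rightarrow> int" where
  "vorder v = int (od v)"

inductive swap :: "('v \<times> int) list \<Rightarrow> ('v \<times> int) list \<Rightarrow> bool" where
  swapI: "E (fst s) (fst t) \<Longrightarrow> swap (p @ [s, t] @ q) (p @ [t, s] @ q)"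

abbreviation shuffle :: "('v \<times> int) list \<Rightarrow> ('v \<times> int) list \<Rightarrow> bool" where
  "shuffle \<equiv> swap\<^sup>*\<^sup>*"

text \<open>The vertices of syllables that can be shuffled to the front of a sequence.\<close>
fun front :: "('v \<times> int) list \<Rightarrow> 'v set" where
  "front [] = {}"
| "front (s # r) = insert (fst s) {x \<in> front r. E x (fst s)}"

fun exponent :: "'v \<Rightarrow> ('v \<times> int) list \<Rightarrow> int" where
  "exponent v [] = 0"
| "exponent v (s # r) = (if fst s = v then snd s else exponent v r)"

fun remove_vertex :: "'v \<Rightarrow> ('v \<times> int) list \<Rightarrow> ('v \<times> int) list" where
  "remove_vertex v [] = []"
| "remove_vertex v (s # r) = (if fst s = v then r else s # remove_vertex v r)"

text \<open>Normal sequences: every exponent is a nonzero residue modulo the vertex order, and no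
  syllable can be shuffled next to an earlier syllable on the same vertex.\<close>
fun normal :: "('v \<times> int) list \<Rightarrow> bool" where
  "normal [] = True"
| "normal (s # r) \<longleftrightarrow>
     snd s \<noteq> 0 \<and> snd s mod vorder (fst s) = snd s \<and> fst s \<notin> front r \<and> normal r"

lemma front_append: "front (X @ Y) = front X \<union> {x \<in> front Y. \<forall>t\<in>set X. E x (fst t)}"
  by (induction X) auto

lemma front_verts: "front w \<subseteq> verts w"
  by (induction w) auto

lemma swap_sym: "swap w w' \<Longrightarrow> swap w' w"
  by (induction rule: swap.induct) (metis E_sym fst_conv swapI)

lemma shuffle_sym: "shuffle w w' \<Longrightarrow> shuffle w' w"
  by (induction rule: rtranclp_induct) (auto intro: converse_rtranclp_into_rtranclp swap_sym)

lemma shuffle_append_left: "shuffle w w' \<Longrightarrow> shuffle (p @ w) (p @ w')"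
proof (induction rule: rtranclp_induct)
  case (step y z)
  have "swap (p @ y) (p @ z)" using step(2) by (induction rule: swap.induct) (metis append_assoc swapI)
  then show ?case using step(3) by simp
qed simp

lemma normal_append_cong: "front X = front Y \<Longrightarrow> normal X = normal Y \<Longrightarrow> normal (p @ X) = normal (p @ Y)"
  by (induction p) (auto simp: front_append)

lemma exponent_append: "exponent v (p @ X) = (if v \<in> verts p then exponent v p else exponent v X)"
  by (induction p) auto

lemma remove_vertex_append:
  "remove_vertex v (p @ X) = (if v \<in> verts p then remove_vertex v p @ X else p @ remove_vertex v X)"
  by (induction p) auto

lemma swap_invariants:
  assumes "swap w w'"
  shows "front w = front w' \<and> normal w = normal w' \<and> exponent v w = exponent v w'
    \<and> verts w = verts w' \<and> shuffle (remove_vertex v w) (remove_vertex v w')"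
  using assms
proof (induction rule: swap.induct)
  case (swapI s t p q)
  have ne: "fst s \<noteq> fst t" using swapI E_irrefl by metis
  have front2: "front (s # t # q) = front (t # s # q)" using swapI E_sym by auto
  have normal2: "normal (s # t # q) = normal (t # s # q)" using swapI E_sym E_irrefl by auto
  have "shuffle (remove_vertex v (p @ [s, t] @ q)) (remove_vertex v (p @ [t, s] @ q))"
  proof (cases "v \<in> verts p")
    case True
    then show ?thesis using swap.swapI[OF swapI, of "remove_vertex v p" q] by (simp add: remove_vertex_append)
  next
    case False
    have "shuffle (remove_vertex v ([s, t] @ q)) (remove_vertex v ([t, s] @ q))"
      using ne swap.swapI[OF swapI, of "[]" "remove_vertex v q"] by auto
    then show ?thesis using False shuffle_append_left by (simp add: remove_vertex_append)
  qed
  then show ?case using front2 normal2 ne normal_append_cong[of "[s, t] @ q" "[t, s] @ q" p]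
    by (cases "fst s = v"; cases "fst t = v") (auto simp: front_append exponent_append)
qed

lemma shuffle_invariants:
  assumes "shuffle w w'"
  shows "front w = front w' \<and> normal w = normal w' \<and> exponent v w = exponent v w'
    \<and> verts w = verts w' \<and> shuffle (remove_vertex v w) (remove_vertex v w')"
  using assms
proof (induction rule: rtranclp_induct)
  case (step y z) then show ?case using swap_invariants[OF step(2), of v] by auto
qed simp

lemma shuffle_verts: "shuffle w w' \<Longrightarrow> verts w = verts w'"
  using shuffle_invariants by blast

lemma shuffle_front: "shuffle w w' \<Longrightarrow> front w = front w'"
  using shuffle_invariants by blast

lemma shuffle_normal: "shuffle w w' \<Longrightarrow> normal w \<Longrightarrow> normal w'"
  using shuffle_invariants by blast

lemma shuffle_to_front: "v \<in> front w \<Longrightarrow> shuffle w ((v, exponent v w) # remove_vertex v w)"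
proof (induction w)
  case (Cons s r)
  show ?case
  proof (cases "fst s = v")
    case True then show ?thesis by (cases s) auto
  next
    case False
    then have v: "v \<in> front r" "E v (fst s)" using Cons by auto
    have "shuffle (s # r) (s # (v, exponent v r) # remove_vertex v r)"
      using Cons.IH[OF v(1)] shuffle_append_left[of _ _ "[s]"] by simp
    moreover have "swap (s # (v, exponent v r) # remove_vertex v r) ((v, exponent v r) # s # remove_vertex v r)"
      using swapI[of s "(v, exponent v r)" "[]"] E_sym[OF v(2)] by simp
    ultimately show ?thesis using False by (auto intro: rtranclp.rtrancl_into_rtrancl)
  qed
qed simp

lemma front_remove_vertex: "E x v \<Longrightarrow> x \<in> front (remove_vertex v w) \<longleftrightarrow> x \<in> front w"
  using E_irrefl by (induction w) auto

lemma normal_remove_vertex: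
  "normal w \<Longrightarrow> v \<in> front w \<Longrightarrow> normal (remove_vertex v w) \<and> v \<notin> front (remove_vertex v w)"
proof (induction w)
  case (Cons s r)
  show ?case
  proof (cases "fst s = v")
    case False
    then have v: "v \<in> front r" "E v (fst s)" using Cons by auto
    have "fst s \<notin> front (remove_vertex v r)" using front_remove_vertex[OF E_sym[OF v(2)]] Cons by auto
    then show ?thesis using Cons False v by auto
  qed (use Cons in auto)
qed simp

lemma exponent_normal: "normal w \<Longrightarrow> v \<in> front w \<Longrightarrow> exponent v w \<noteq> 0 \<and> exponent v w mod vorder v = exponent v w"
  by (induction w) auto

lemma exponent_remove_vertex: "x \<noteq> v \<Longrightarrow> exponent x (remove_vertex v w) = exponent x w"
  by (induction w) auto

lemma remove_vertex_commute: "remove_vertex x (remove_vertex v w) = remove_vertex v (remove_vertex x w)"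
  by (induction w) auto

lemma verts_remove_vertex: "verts (remove_vertex v w) \<subseteq> verts w"
  by (induction w) auto

lemma length_remove_vertex: "v \<in> verts w \<Longrightarrow> length (remove_vertex v w) < length w"
  by (induction w) auto

text \<open>Normal form of v^e \<cdot> w for a normal sequence w: merge with the front syllable on v if
  there is one, drop the syllable if its exponent vanishes modulo the order of v.\<close>
definition push :: "'v \<Rightarrow> int \<Rightarrow> ('v \<times> int) list \<Rightarrow> ('v \<times> int) list" where
  "push v e w = (if v \<in> front w then
       (if (exponent v w + e) mod vorder v = 0 then remove_vertex v w
        else (v, (exponent v w + e) mod vorder v) # remove_vertex v w)
     else (if e mod vorder v = 0 then w else (v, e mod vorder v) # w))"

lemma normal_push: "normal w \<Longrightarrow> normal (push v e w)"
  unfolding push_def using normal_remove_vertex by auto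

lemma verts_push: "verts (push v e w) \<subseteq> insert v (verts w)"
  unfolding push_def using verts_remove_vertex by auto

lemma push_mod: "push v (e mod vorder v) w = push v e w"
  unfolding push_def by (simp add: mod_add_right_eq)

lemma push_push: "normal w \<Longrightarrow> push v e (push v e' w) = push v (e + e') w"
proof (cases "v \<in> front w")
  case True
  assume w: "normal w"
  note rem = normal_remove_vertex[OF w True]
  show ?thesis
  proof (cases "(exponent v w + e') mod vorder v = 0")
    case True
    then have "(exponent v w + (e + e')) mod vorder v = e mod vorder v"
      by (metis add.commute add.left_commute add_0 mod_add_left_eq)
    then show ?thesis using True \<open>v \<in> front w\<close> rem unfolding push_def by auto
  next
    case False
    have k: "((exponent v w + e') mod vorder v + e) mod vorder v = (exponent v w + (e + e')) mod vorder v"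
      unfolding mod_add_left_eq by (simp add: ac_simps)
    show ?thesis using False \<open>v \<in> front w\<close> unfolding push_def k[symmetric] by auto
  qed
next
  case False
  then show ?thesis unfolding push_def
    by (auto simp: mod_add_left_eq mod_add_right_eq add_ac dvd_add_left_iff dvd_add_right_iff)
qed

lemma push_zero: "normal w \<Longrightarrow> shuffle (push v 0 w) w"
  unfolding push_def
  using exponent_normal[of w v] shuffle_to_front[of v w] shuffle_sym by auto

lemma push_shuffle: "shuffle w w' \<Longrightarrow> shuffle (push v e w) (push v e w')"
  unfolding push_def using shuffle_invariants[of w w' v] shuffle_append_left[of _ _ "[_]"]
  by auto

lemma push_commute: "E v v' \<Longrightarrow> shuffle (push v e (push v' e' w)) (push v' e' (push v e w))"
proof -
  assume E: "E v v'"
  have ne: "v \<noteq> v'" using E E_irrefl by metis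
  have E': "E v' v" using E_sym[OF E] .
  have front_cons: "\<And>R k. v \<in> front ((v', k) # R) \<longleftrightarrow> v \<in> front R"
    "\<And>R k. v' \<in> front ((v, k) # R) \<longleftrightarrow> v' \<in> front R" using ne E E' by auto
  have sw: "\<And>a b R. fst a = v \<Longrightarrow> fst b = v' \<Longrightarrow> shuffle (a # b # R) (b # a # R)"
    using swapI[of _ _ "[]"] E by auto
  show ?thesis
    unfolding push_def
    using ne front_cons front_remove_vertex[OF E] front_remove_vertex[OF E']
      exponent_remove_vertex[OF ne] exponent_remove_vertex[OF ne[symmetric]]
      remove_vertex_commute[of v v'] sw
    by auto
qed

text \<open>Words act on normal sequences letter by letter from the right; the action respects the
  congruence up to shuffling. Expanding a syllable sequence back into a word inverts the action.\<close>

fun act :: "'v letter list \<Rightarrow> ('v \<times> int) list \<Rightarrow> ('v \<times> int) list" where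
  "act [] w = w"
| "act (x # xs) w = push (fst x) (if snd x then 1 else -1) (act xs w)"

definition gpow :: "'v \<Rightarrow> int \<Rightarrow> 'v letter list" where
  "gpow v k = (if k \<ge> 0 then replicate (nat k) (v, True) else replicate (nat (-k)) (v, False))"

definition expand :: "('v \<times> int) list \<Rightarrow> 'v letter list" where
  "expand w = concat (map (\<lambda>s. gpow (fst s) (snd s)) w)"

lemma expand_simps[simp]:
  "expand [] = []" "expand (s # r) = gpow (fst s) (snd s) @ expand r"
  "expand (X @ Y) = expand X @ expand Y"
  by (auto simp: expand_def)

lemma act_append: "act (a @ b) w = act a (act b w)"
  by (induction a) auto

lemma normal_act: "normal w \<Longrightarrow> normal (act x w)"
  by (induction x) (auto intro: normal_push)

lemma act_shuffle: "shuffle w w' \<Longrightarrow> shuffle (act x w) (act x w')"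
  by (induction x) (auto intro: push_shuffle)

lemma verts_act: "verts (act x w) \<subseteq> verts x \<union> verts w"
proof (induction x)
  case (Cons a x)
  have "verts (act (a # x) w) \<subseteq> insert (fst a) (verts (act x w))" using verts_push by simp
  also have "\<dots> \<subseteq> insert (fst a) (verts x \<union> verts w)" using Cons by blast
  finally show ?case by auto
qed simp

lemma act_replicate:
  "normal w \<Longrightarrow> act (replicate (Suc m) (v, b)) w = push v (int (Suc m) * (if b then 1 else -1)) w"
proof (induction m)
  case (Suc m)
  have "act (replicate (Suc (Suc m)) (v, b)) w
      = push v (if b then 1 else -1) (push v (int (Suc m) * (if b then 1 else -1)) w)"
    using Suc by simp
  also have "\<dots> = push v ((if b then 1 else -1) + int (Suc m) * (if b then 1 else -1)) w"
    by (rule push_push[OF Suc.prems])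
  finally show ?case by (simp add: algebra_simps)
qed simp

text \<open>Well-definedness: each defining relation acts trivially up to shuffling, so equivalent words
  have shuffle-equivalent actions.\<close>
lemma act_respects_weq: "weq x y \<Longrightarrow> normal w \<Longrightarrow> shuffle (act x w) (act y w)"
proof (induction arbitrary: w rule: gp_eq.induct)
  case (gp_sym w w') then show ?case using shuffle_sym by blast
next
  case (gp_trans w w' w'') then show ?case by (meson rtranclp_trans)
next
  case (gp_ctxt w w' a b x)
  have "shuffle (act w (act b x)) (act w' (act b x))" using gp_ctxt normal_act by blast
  then show ?case by (simp add: act_append act_shuffle)
next
  case (gp_cancel v s w)
  have "act [(v, s), (v, \<not> s)] w = push v 0 w"
    using push_push[OF gp_cancel(2)] by (cases s) auto
  then show ?case using push_zero[OF gp_cancel(2)] by simp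
next
  case (gp_order v w)
  then obtain m where m: "od v = Suc m" by (cases "od v") auto
  have "act (replicate (od v) (v, True)) w = push v (vorder v) w"
    using act_replicate[OF gp_order(3), of m v True] m by (simp add: vorder_def)
  also have "\<dots> = push v 0 w" using push_mod[of v "vorder v"] push_mod[of v 0] by simp
  finally show ?case using push_zero[OF gp_order(3)] by simp
next
  case (gp_comm v v' s s' w)
  then show ?case using push_commute[OF gp_comm(1)] by simp
qed simp

lemma replicate_words: "v \<in> V \<Longrightarrow> replicate a (v, s) \<in> words"
  by (auto simp: letters_def)

lemma gpow_words: "v \<in> V \<Longrightarrow> gpow v k \<in> words"
  by (auto simp: gpow_def letters_def)

lemma gpow_zero[simp]: "gpow v 0 = []"
  by (simp add: gpow_def)

lemma gpow_fst: "x \<in> set (gpow v k) \<Longrightarrow> fst x = v"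
  by (auto simp: gpow_def split: if_splits)

lemma expand_words: "verts w \<subseteq> V \<Longrightarrow> expand w \<in> words"
proof (induction w)
  case (Cons s w)
  then have "gpow (fst s) (snd s) \<in> words" by (intro gpow_words) auto
  then show ?case using Cons by simp
qed simp

lemma verts_expand: "verts (expand w) \<subseteq> verts w"
  by (induction w) (auto dest: gpow_fst)

lemma cancel_replicate: "v \<in> V \<Longrightarrow>
  weq (replicate a (v, s) @ replicate b (v, \<not>s))
      (if b \<le> a then replicate (a - b) (v, s) else replicate (b - a) (v, \<not>s))"
proof (induction b arbitrary: a)
  case 0 then show ?case using weq_refl[OF replicate_words[OF 0]] by simp
next
  case (Suc b)
  show ?case
  proof (cases a)
    case 0 then show ?thesis using weq_refl[OF replicate_words[OF Suc(2), of "Suc b" "\<not> s"]] by simp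
  next
    case (Suc a')
    have "replicate a (v, s) @ replicate (Suc b) (v, \<not>s)
        = replicate a' (v, s) @ [(v, s), (v, \<not>s)] @ replicate b (v, \<not>s)"
      using Suc by (simp add: replicate_append_same[symmetric])
    moreover have "weq (replicate a' (v, s) @ [(v, s), (v, \<not>s)] @ replicate b (v, \<not>s))
                      (replicate a' (v, s) @ [] @ replicate b (v, \<not>s))"
      using \<open>v \<in> V\<close> by (intro gp_ctxt gp_cancel) (auto simp: letters_def)
    ultimately show ?thesis using weq_trans Suc.IH[OF \<open>v \<in> V\<close>, of a'] Suc
      by (cases "b \<le> a'") auto
  qed
qed

lemma gpow_add: "v \<in> V \<Longrightarrow> weq (gpow v j @ gpow v k) (gpow v (j + k))"
proof -
  assume v: "v \<in> V"
  consider "j \<ge> 0" "k \<ge> 0" | "j < 0" "k < 0" | "j \<ge> 0" "k < 0" | "j < 0" "k \<ge> 0" by linarith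
  then show ?thesis
  proof cases
    case 1
    then have "gpow v j @ gpow v k = gpow v (j + k)"
      by (simp add: gpow_def replicate_add[symmetric] nat_add_distrib)
    then show ?thesis using gpow_words[OF v] weq_refl by metis
  next
    case 2
    then have "gpow v j @ gpow v k = gpow v (j + k)"
      by (simp add: gpow_def replicate_add[symmetric] nat_add_distrib)
    then show ?thesis using gpow_words[OF v] weq_refl by metis
  next
    case 3
    have "weq (gpow v j @ gpow v k)
        (if nat (-k) \<le> nat j then replicate (nat j - nat (-k)) (v, True) else replicate (nat (-k) - nat j) (v, \<not> True))"
      using cancel_replicate[OF v, of "nat j" True "nat (-k)"] 3 by (simp add: gpow_def)
    moreover have "(if nat (-k) \<le> nat j then replicate (nat j - nat (-k)) (v, True)
        else replicate (nat (-k) - nat j) (v, \<not> True)) = gpow v (j + k)"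
      using 3 by (auto simp: gpow_def nat_diff_distrib)
    ultimately show ?thesis by simp
  next
    case 4
    have "weq (gpow v j @ gpow v k)
        (if nat k \<le> nat (-j) then replicate (nat (-j) - nat k) (v, False) else replicate (nat k - nat (-j)) (v, \<not> False))"
      using cancel_replicate[OF v, of "nat (-j)" False "nat k"] 4 by (simp add: gpow_def)
    moreover have "(if nat k \<le> nat (-j) then replicate (nat (-j) - nat k) (v, False)
        else replicate (nat k - nat (-j)) (v, \<not> False)) = gpow v (j + k)"
      using 4 by (auto simp: gpow_def nat_diff_distrib)
    ultimately show ?thesis by simp
  qed
qed

lemma gpow_shift: "v \<in> V \<Longrightarrow> weq (gpow v (k + vorder v)) (gpow v k)"
proof (cases "od v = 0")
  case True
  assume v: "v \<in> V"
  then show ?thesis using True weq_refl[OF gpow_words[OF v]] by (simp add: vorder_def)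
next
  case False
  assume v: "v \<in> V"
  have "weq (gpow v (vorder v)) []" using gp_order[OF v] False by (simp add: gpow_def vorder_def)
  then have "weq (gpow v k @ gpow v (vorder v)) (gpow v k @ [])"
    using weq_append_left gpow_words[OF v] by blast
  then show ?thesis using weq_sym[OF gpow_add[OF v]] weq_trans by fastforce
qed

lemma gpow_mod: "v \<in> V \<Longrightarrow> weq (gpow v (k mod vorder v)) (gpow v k)"
proof -
  assume v: "v \<in> V"
  have "weq (gpow v (k + z * vorder v)) (gpow v k)" for z
  proof (induction z rule: int_induct[where k = 0])
    case base then show ?case using weq_refl[OF gpow_words[OF v]] by simp
  next
    case (step1 i)
    have "gpow v (k + (i + 1) * vorder v) = gpow v ((k + i * vorder v) + vorder v)"
      by (simp add: algebra_simps)
    then show ?case using weq_trans[OF gpow_shift[OF v] step1(2)] by simp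
  next
    case (step2 i)
    have "weq (gpow v (k + (i - 1) * vorder v)) (gpow v (k + i * vorder v))"
      using weq_sym[OF gpow_shift[OF v, of "k + (i - 1) * vorder v"]] by (simp add: algebra_simps)
    then show ?case using weq_trans step2(2) by blast
  qed
  from this[of "- (k div vorder v)"] show ?thesis by (simp add: minus_div_mult_eq_mod[symmetric])
qed

lemma expand_shuffle: "shuffle w w' \<Longrightarrow> verts w \<subseteq> V \<Longrightarrow> weq (expand w) (expand w')"
proof (induction rule: rtranclp_induct)
  case base then show ?case using weq_refl[OF expand_words] by simp
next
  case (step y z)
  have yV: "verts y \<subseteq> V" using shuffle_verts[OF step(1)] step(4) by simp
  have "weq (expand y) (expand z)" using step(2) yV
  proof (induction rule: swap.induct)
    case (swapI s t p q)
    let ?S = "gpow (fst s) (snd s)" and ?T = "gpow (fst t) (snd t)"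
    have "\<forall>x\<in>set ?S. \<forall>y\<in>set ?T. letters_commute x y"
      using swapI(1) by (auto dest!: gpow_fst intro: letters_commute_adjacent)
    then have "weq (?S @ ?T) (?T @ ?S)" using swapI(2) by (intro commute_words gpow_words) auto
    then have "weq (expand p @ (?S @ ?T) @ expand q) (expand p @ (?T @ ?S) @ expand q)"
      using swapI(2) by (intro gp_ctxt expand_words) auto
    then show ?case by simp
  qed
  then show ?case using step(3)[OF step(4)] weq_trans by blast
qed

lemma expand_push: "normal w \<Longrightarrow> v \<in> V \<Longrightarrow> verts w \<subseteq> V
  \<Longrightarrow> weq (expand (push v e w)) (gpow v e @ expand w)"
proof (cases "v \<in> front w")
  case True
  assume w: "normal w" and v: "v \<in> V" and wV: "verts w \<subseteq> V"
  define k R where "k = exponent v w" and "R = remove_vertex v w"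
  have RV: "verts R \<subseteq> V" using verts_remove_vertex wV R_def by blast
  have "expand (push v e w) = gpow v ((e + k) mod vorder v) @ expand R"
    using True unfolding push_def k_def R_def by (simp add: add.commute)
  also have "weq (gpow v ((e + k) mod vorder v) @ expand R) (gpow v (e + k) @ expand R)"
    using weq_append_right[OF gpow_mod[OF v] expand_words[OF RV]] .
  also have "weq (gpow v (e + k) @ expand R) ((gpow v e @ gpow v k) @ expand R)"
    using weq_append_right[OF weq_sym[OF gpow_add[OF v]] expand_words[OF RV]] .
  also have "weq ((gpow v e @ gpow v k) @ expand R) (gpow v e @ expand w)"
    using weq_append_left[OF weq_sym[OF expand_shuffle[OF shuffle_to_front[OF True] wV]] gpow_words[OF v]]
    unfolding k_def R_def by simp
  finally show ?thesis .
next
  case False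
  assume v: "v \<in> V" and wV: "verts w \<subseteq> V"
  have "expand (push v e w) = gpow v (e mod vorder v) @ expand w"
    using False unfolding push_def by auto
  then show ?thesis using weq_append_right[OF gpow_mod[OF v] expand_words[OF wV]] by simp
qed

lemma expand_act: "x \<in> words \<Longrightarrow> normal w \<Longrightarrow> verts w \<subseteq> V \<Longrightarrow> weq (expand (act x w)) (x @ expand w)"
proof (induction x)
  case Nil then show ?case using weq_refl[OF expand_words] by simp
next
  case (Cons a x)
  have aV: "fst a \<in> V" and "verts x \<subseteq> V" using Cons(2) by (auto simp: letters_def)
  then have xV: "verts (act x w) \<subseteq> V" using verts_act[of x w] Cons(4) by blast
  have "gpow (fst a) (if snd a then 1 else -1) = [a]" by (cases a) (auto simp: gpow_def)
  then have "weq (expand (act (a # x) w)) ([a] @ expand (act x w))"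
    using expand_push[OF normal_act[OF Cons(3)] aV xV, of "if snd a then 1 else -1"] by simp
  also have "weq ([a] @ expand (act x w)) ([a] @ x @ expand w)"
    using Cons by (intro weq_append_left) auto
  finally show ?case by simp
qed

lemma act_power:
  assumes "normal R" "v \<notin> front R" "k \<noteq> 0" "k mod vorder v = k"
  shows "act (gpow v k) R = (v, k) # R"
proof -
  obtain m b where mb: "gpow v k = replicate (Suc m) (v, b)" "int (Suc m) * (if b then 1 else -1) = k"
  proof (cases "k > 0")
    case True then show ?thesis using that[of "nat k - 1" True] by (simp add: gpow_def)
  next
    case False then show ?thesis using that[of "nat (-k) - 1" False] assms(3) by (simp add: gpow_def)
  qed
  show ?thesis using act_replicate[OF assms(1)] mb assms unfolding push_def by simp
qed

lemma act_expand: "normal (N @ M) \<Longrightarrow> act (expand N) M = N @ M"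
proof (induction N)
  case (Cons s N)
  then show ?case using act_power[of "N @ M" "fst s" "snd s"] by (simp add: act_append)
qed simp

definition star :: "'v set \<Rightarrow> 'v set" where
  "star A = A \<union> {v \<in> V. \<forall>a\<in>A. E v a}"

abbreviation commutes :: "'v letter list \<Rightarrow> 'v letter list \<Rightarrow> bool" where
  "commutes x y \<equiv> weq (x @ y) (y @ x)"

lemma star_letters_commute:
  assumes "complete_subgraph V E A" "fst x \<in> star A" "fst y \<in> A"
  shows "letters_commute x y"
proof (cases "fst x = fst y")
  case True
  then have "fst x \<in> V" using assms by (auto simp: complete_subgraph_def)
  then show ?thesis using True by (rule letters_commute_same)
next
  case False
  then have "E (fst x) (fst y)" using assms by (auto simp: star_def complete_subgraph_def)
  then show ?thesis by (rule letters_commute_adjacent)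
qed

lemma star_commutes:
  assumes "complete_subgraph V E A" "x \<in> lists (letters (star A))" "y \<in> lists (letters A)"
  shows "commutes x y"
proof (rule commute_words)
  have "star A \<subseteq> V" using assms(1) by (auto simp: star_def complete_subgraph_def)
  then show "x \<in> words" "y \<in> words" using assms by (auto simp: letters_def complete_subgraph_def)
  show "\<forall>a\<in>set x. \<forall>b\<in>set y. letters_commute a b"
  proof (intro ballI)
    fix a b assume "a \<in> set x" "b \<in> set y"
    then have "fst a \<in> star A" "fst b \<in> A" using assms(2,3) by (auto simp: letters_def)
    then show "letters_commute a b" by (rule star_letters_commute[OF assms(1)])
  qed
qed

lemma commutes_cong: "weq x x' \<Longrightarrow> y \<in> words \<Longrightarrow> commutes x y \<Longrightarrow> commutes x' y"
  by (meson weq_append_left weq_append_right weq_sym weq_trans)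

lemma commutes_cancel_left:
  assumes "commutes P Y" "commutes (P @ X) Y"
  shows "commutes X Y"
proof -
  have X: "X \<in> words" using weq_words[OF assms(2)] by simp
  have "weq (P @ (X @ Y)) (Y @ P @ X)" using assms(2) by simp
  also have "weq (Y @ P @ X) (P @ Y @ X)" using weq_append_right[OF weq_sym[OF assms(1)] X] by simp
  finally show ?thesis by (rule weq_cancel_left)
qed

lemma commutes_cancel_right:
  assumes "commutes P Y" "commutes (X @ P) Y"
  shows "commutes X Y"
proof -
  have X: "X \<in> words" using weq_words[OF assms(2)] by simp
  have "weq ((X @ Y) @ P) (X @ P @ Y)" using weq_append_left[OF weq_sym[OF assms(1)] X] by simp
  also have "weq (X @ P @ Y) (Y @ X @ P)" using assms(2) by simp
  finally have "weq ((X @ Y) @ P) ((Y @ X) @ P)" by simp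
  then show ?thesis by (rule weq_cancel_right)
qed

definition rear :: "('v \<times> int) list \<Rightarrow> 'v set" where
  "rear N = {fst s | s p q. N = p @ s # q \<and> (\<forall>t\<in>set q. E (fst s) (fst t))}"

lemma shuffle_to_back:
  assumes "v \<in> rear N"
  shows "\<exists>p s q. fst s = v \<and> N = p @ s # q \<and> shuffle N (p @ q @ [s])"
proof -
  obtain s p q where h: "N = p @ s # q" "\<forall>t\<in>set q. E (fst s) (fst t)" "v = fst s"
    using assms unfolding rear_def by blast
  have "shuffle (s # q) (q @ [s])" using h(2)
  proof (induction q)
    case (Cons t q)
    have "swap (s # t # q) (t # s # q)" using swapI[of s t "[]" q] Cons(2) by simp
    moreover have "shuffle (t # s # q) (t # q @ [s])"
      using Cons shuffle_append_left[of _ _ "[t]"] by simp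
    ultimately show ?case by (simp add: converse_rtranclp_into_rtranclp)
  qed simp
  then have "shuffle N (p @ q @ [s])" using h(1) shuffle_append_left by fastforce
  then show ?thesis using h by blast
qed

lemma rear_Cons: "rear r \<subseteq> rear (s # r)"
proof
  fix x assume "x \<in> rear r"
  then obtain s' p q where "r = p @ s' # q" "\<forall>t\<in>set q. E (fst s') (fst t)" "x = fst s'"
    unfolding rear_def by blast
  moreover have "s # r = (s # p) @ s' # q" using \<open>r = p @ s' # q\<close> by simp
  ultimately show "x \<in> rear (s # r)" unfolding rear_def by blast
qed

lemma rear_head: "\<forall>t\<in>set r. E (fst s) (fst t) \<Longrightarrow> fst s \<in> rear (s # r)"
proof -
  assume "\<forall>t\<in>set r. E (fst s) (fst t)"
  moreover have "s # r = [] @ s # r" by simp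
  ultimately show ?thesis unfolding rear_def by blast
qed

lemma normal_prefix: "normal (X @ Y) \<Longrightarrow> normal X"
  by (induction X) (auto simp: front_append)

lemma normal_append_front: "normal U \<Longrightarrow> normal N \<Longrightarrow> verts U \<inter> front N = {} \<Longrightarrow> normal (U @ N)"
  by (induction U) (auto simp: front_append)

lemma normal_append_back: "normal N \<Longrightarrow> normal U \<Longrightarrow> front U \<inter> rear N = {} \<Longrightarrow> normal (N @ U)"
proof (induction N)
  case (Cons s r)
  have "front U \<inter> rear r = {}" using Cons(4) rear_Cons[of r s] by blast
  then have "normal (r @ U)" using Cons by simp
  moreover have "fst s \<notin> front (r @ U)"
    using Cons(2,4) rear_head[of r s] by (auto simp: front_append)
  ultimately show ?case using Cons(2) by simp
qed simp

lemma gpow_star_commutes: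
  assumes "complete_subgraph V E (verts U)" "v \<in> star (verts U)"
  shows "commutes (gpow v k) (expand U)"
proof (rule star_commutes[OF assms(1)])
  show "gpow v k \<in> lists (letters (star (verts U)))" using assms(2) by (auto simp: letters_def dest: gpow_fst)
  show "expand U \<in> lists (letters (verts U))" using verts_expand[of U] by (simp add: lists_letters_iff)
qed

lemma commutes_drop_first:
  assumes "shuffle N (s # R)" "verts N \<subseteq> V" "Y \<in> words"
    and "commutes (gpow (fst s) (snd s)) Y" "commutes (expand N) Y"
  shows "commutes (expand R) Y"
proof -
  have "weq (expand N) (gpow (fst s) (snd s) @ expand R)" using expand_shuffle[OF assms(1,2)] by simp
  then have "commutes (gpow (fst s) (snd s) @ expand R) Y" using commutes_cong assms(3,5) by blast
  then show ?thesis using commutes_cancel_left assms(4) by blast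
qed

lemma commutes_drop_last:
  assumes "shuffle N (R @ [s])" "verts N \<subseteq> V" "Y \<in> words"
    and "commutes (gpow (fst s) (snd s)) Y" "commutes (expand N) Y"
  shows "commutes (expand R) Y"
proof -
  have "weq (expand N) (expand R @ gpow (fst s) (snd s))" using expand_shuffle[OF assms(1,2)] by simp
  then have "commutes (expand R @ gpow (fst s) (snd s)) Y" using commutes_cong assms(3,5) by blast
  then show ?thesis using commutes_cancel_right assms(4) by blast
qed

text \<open>Let U be normal with clique support A. If a normal N commuting with U has no
  syllable in the star of A that can be moved to its front or its back, then U\<cdot>N and N\<cdot>U are
  both normal and equal up to shuffling, so the first syllable of N lies in the front of U\<cdot>N,
  which is contained in the star of A; hence N is empty.\<close>
lemma commuting_sequence_blocked:
  assumes U: "normal U" "complete_subgraph V E (verts U)"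
    and N: "normal N" "verts N \<subseteq> V" "commutes (expand N) (expand U)"
    and blocked: "front N \<inter> star (verts U) = {}" "rear N \<inter> star (verts U) = {}"
  shows "N = []"
proof (rule ccontr)
  assume "N \<noteq> []"
  then obtain s r where Ns: "N = s # r" by (cases N) auto
  have A_star: "verts U \<subseteq> star (verts U)" by (simp add: star_def)
  have "normal (U @ N)" using normal_append_front[OF U(1) N(1)] blocked(1) A_star by blast
  moreover have "normal (N @ U)"
    using normal_append_back[OF N(1) U(1)] blocked(2) A_star front_verts[of U] by blast
  ultimately have "act (expand (U @ N)) [] = U @ N" "act (expand (N @ U)) [] = N @ U"
    using act_expand[of "U @ N" "[]"] act_expand[of "N @ U" "[]"] by simp_all
  moreover have "weq (expand (N @ U)) (expand (U @ N))" using N(3) by simp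
  ultimately have "shuffle (N @ U) (U @ N)" using act_respects_weq[of _ _ "[]"] by fastforce
  then have "fst s \<in> front (U @ N)" using shuffle_front Ns by fastforce
  moreover have "front (U @ N) \<subseteq> star (verts U)"
    using front_verts[of U] front_verts[of N] N(2) by (auto simp: front_append star_def)
  ultimately show False using blocked(1) Ns by auto
qed

text \<open>A normal sequence whose expansion commutes with that of U has all its vertices in the star
  of the support of U: peel off movable syllables in the star until the sequence is blocked.\<close>
lemma commuting_sequence_in_star:
  assumes U: "normal U" "complete_subgraph V E (verts U)"
  shows "normal N \<Longrightarrow> verts N \<subseteq> V \<Longrightarrow> commutes (expand N) (expand U) \<Longrightarrow> verts N \<subseteq> star (verts U)"
proof (induction "length N" arbitrary: N rule: less_induct)
  case less
  let ?S = "star (verts U)"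
  have UW: "expand U \<in> words" using U(2) by (intro expand_words) (simp add: complete_subgraph_def)
  consider v where "v \<in> front N" "v \<in> ?S" | v where "v \<in> rear N" "v \<in> ?S"
    | "front N \<inter> ?S = {}" "rear N \<inter> ?S = {}" by blast
  then show ?case
  proof cases
    case 1
    define R where "R = remove_vertex v N"
    have sh: "shuffle N ((v, exponent v N) # R)" using shuffle_to_front[OF 1(1)] R_def by simp
    have "verts R \<subseteq> ?S"
    proof (rule less.hyps)
      show "length R < length N" using length_remove_vertex front_verts 1(1) R_def by blast
      show "normal R" "verts R \<subseteq> V" using shuffle_normal[OF sh] shuffle_verts[OF sh] less.prems by auto
      show "commutes (expand R) (expand U)"
        using commutes_drop_first[OF sh less.prems(2) UW] gpow_star_commutes[OF U(2) 1(2)]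
          less.prems(3) by simp
    qed
    then show ?thesis using shuffle_verts[OF sh] 1(2) by simp
  next
    case 2
    obtain p s q where psq: "fst s = v" "N = p @ s # q" "shuffle N ((p @ q) @ [s])"
      using shuffle_to_back[OF 2(1)] by auto
    have "verts (p @ q) \<subseteq> ?S"
    proof (rule less.hyps)
      show "length (p @ q) < length N" using psq by simp
      show "normal (p @ q)" "verts (p @ q) \<subseteq> V"
        using normal_prefix shuffle_normal[OF psq(3)] less.prems psq(2) by auto
      show "commutes (expand (p @ q)) (expand U)"
        using commutes_drop_last[OF psq(3) less.prems(2) UW] gpow_star_commutes[OF U(2) 2(2)]
          psq(1) less.prems(3) by simp
    qed
    then show ?thesis using psq 2(2) by auto
  next
    case 3
    then show ?thesis using commuting_sequence_blocked[OF U less.prems] by simp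
  qed
qed

lemma normal_form:
  assumes "x \<in> words"
  shows "normal (act x []) \<and> verts (act x []) \<subseteq> verts x \<and> weq (expand (act x [])) x"
  using normal_act[of "[]" x] verts_act[of x "[]"] expand_act[OF assms, of "[]"]
    assms by (auto simp: lists_letters_iff)

abbreviation cls :: "'v letter list \<Rightarrow> 'v letter list set" where
  "cls \<equiv> gp_cls V E od"

abbreviation GP :: "'v letter list set monoid" where
  "GP \<equiv> graph_product V E od"

lemma cls_mem: "w' \<in> cls w \<longleftrightarrow> weq w w'"
  unfolding gp_cls_def gp_rel_def by auto

lemma cls_eq: "a \<in> words \<Longrightarrow> cls a = cls b \<longleftrightarrow> weq a b"
proof
  assume "a \<in> words" "cls a = cls b"
  then show "weq a b" using weq_refl weq_sym cls_mem by metis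
next
  assume "weq a b"
  then show "cls a = cls b" unfolding set_eq_iff cls_mem using weq_sym weq_trans by blast
qed

lemma carrier_cls: "g \<in> carrier GP \<Longrightarrow> \<exists>x\<in>words. g = cls x"
  unfolding graph_product_def quotient_def gp_cls_def by auto

lemma cls_carrier: "x \<in> words \<Longrightarrow> cls x \<in> carrier GP"
  unfolding graph_product_def quotient_def gp_cls_def by auto

lemma mult_cls: "x \<in> words \<Longrightarrow> y \<in> words \<Longrightarrow> cls x \<otimes>\<^bsub>GP\<^esub> cls y = cls (x @ y)"
proof -
  assume x: "x \<in> words" and y: "y \<in> words"
  have prod: "cls x \<otimes>\<^bsub>GP\<^esub> cls y = (\<Union>x'\<in>cls x. \<Union>y'\<in>cls y. cls (x' @ y'))"
    unfolding graph_product_def by simp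
  have "cls (x' @ y') = cls (x @ y)" if "x' \<in> cls x" "y' \<in> cls y" for x' y'
    using that x y cls_eq[of "x @ y" "x' @ y'"] weq_append by (simp add: cls_mem)
  moreover have "x \<in> cls x" "y \<in> cls y" using weq_refl x y cls_mem by blast+
  ultimately show ?thesis unfolding prod by blast
qed

lemma cls_commute_iff:
  "x \<in> words \<Longrightarrow> y \<in> words \<Longrightarrow> cls x \<otimes>\<^bsub>GP\<^esub> cls y = cls y \<otimes>\<^bsub>GP\<^esub> cls x \<longleftrightarrow> commutes x y"
  by (simp add: mult_cls cls_eq)

lemma reduced_word_exists: "x \<in> words \<Longrightarrow> \<exists>w. reduced_word V E od w \<and> weq x w"
proof -
  assume x: "x \<in> words"
  obtain w where w: "weq x w" "\<forall>y. weq x y \<longrightarrow> length w \<le> length y"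
    using ex_has_least_nat[of "\<lambda>w. weq x w" x length] weq_refl[OF x] by blast
  then have "w \<in> words" "\<forall>w'. weq w w' \<longrightarrow> length w \<le> length w'"
    using weq_words weq_trans by blast+
  then show ?thesis using w unfolding reduced_word_def by blast
qed

lemma supp_subset: "z \<in> lists (letters D) \<Longrightarrow> gp_supp V E od (cls z) \<subseteq> D"
proof
  fix v assume z: "z \<in> lists (letters D)" and "v \<in> gp_supp V E od (cls z)"
  then obtain w where w: "cls w = cls z" "reduced_word V E od w" "v \<in> verts w"
    unfolding gp_supp_def by blast
  then have "weq w z" using cls_eq by (simp add: reduced_word_def)
  then show "v \<in> D" using reduced_word_vertices[OF w(2) _ z] w(3) by blast
qed

lemma supp_normal:
  assumes "normal U" "verts U \<subseteq> V"
  shows "gp_supp V E od (cls (expand U)) = verts U"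
proof
  show "gp_supp V E od (cls (expand U)) \<subseteq> verts U"
    using supp_subset verts_expand by (simp add: lists_letters_iff)
  show "verts U \<subseteq> gp_supp V E od (cls (expand U))"
  proof
    fix v assume v: "v \<in> verts U"
    have UW: "expand U \<in> words" using expand_words[OF assms(2)] .
    obtain w where w: "reduced_word V E od w" "weq (expand U) w"
      using reduced_word_exists[OF UW] by blast
    have "act (expand U) [] = U" using act_expand[of U "[]"] assms(1) by simp
    then have "shuffle U (act w [])" using act_respects_weq[OF w(2), of "[]"] by simp
    then have "verts U \<subseteq> verts w" using shuffle_verts verts_act[of w "[]"] by auto
    moreover have "cls (expand U) = cls w" using cls_eq[OF UW] w(2) by simp
    ultimately show "v \<in> gp_supp V E od (cls (expand U))"
      using v w(1) unfolding gp_supp_def by blast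
  qed
qed

lemma centralizer_clique_normal:
  assumes U: "normal U" "complete_subgraph V E (verts U)"
  shows "centralizer GP (cls (expand U)) = gp_sub V E od (star (verts U))"
proof -
  have UW: "expand U \<in> words" using U(2) by (intro expand_words) (simp add: complete_subgraph_def)
  have star_V: "star (verts U) \<subseteq> V" using U(2) by (auto simp: star_def complete_subgraph_def)
  show ?thesis
  proof
    show "centralizer GP (cls (expand U)) \<subseteq> gp_sub V E od (star (verts U))"
    proof
      fix g assume g: "g \<in> centralizer GP (cls (expand U))"
      then obtain x where x: "x \<in> words" "g = cls x" using carrier_cls unfolding centralizer_def by blast
      define N where "N = act x []"
      have "verts x \<subseteq> V" using x(1) by (simp add: lists_letters_iff)
      then have N: "normal N" "verts N \<subseteq> V" "weq (expand N) x"
        using normal_form[OF x(1)] unfolding N_def by blast+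
      have "commutes x (expand U)" using g x cls_commute_iff[OF x(1) UW] by (simp add: centralizer_def)
      then have "commutes (expand N) (expand U)" using commutes_cong[OF weq_sym[OF N(3)] UW] by blast
      then have "verts N \<subseteq> star (verts U)" using commuting_sequence_in_star[OF U N(1,2)] by blast
      moreover have "g = cls (expand N)" using x cls_eq[OF x(1)] weq_sym[OF N(3)] by simp
      ultimately show "g \<in> gp_sub V E od (star (verts U))"
        unfolding gp_sub_def using verts_expand[of N] by (auto simp: lists_letters_iff)
    qed
    show "gp_sub V E od (star (verts U)) \<subseteq> centralizer GP (cls (expand U))"
    proof
      fix g assume "g \<in> gp_sub V E od (star (verts U))"
      then obtain x where x: "x \<in> lists (letters (star (verts U)))" "g = cls x"
        unfolding gp_sub_def by blast
      have xW: "x \<in> words" using x(1) star_V by (auto simp: lists_letters_iff)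
      have "commutes x (expand U)"
        using star_commutes[OF U(2) x(1)] verts_expand[of U] by (simp add: lists_letters_iff)
      then show "g \<in> centralizer GP (cls (expand U))"
        using cls_commute_iff[OF xW UW] cls_carrier[OF xW] x(2) by (simp add: centralizer_def)
    qed
  qed
qed

end

theorem lemma2p2:
  fixes V :: "'v set" and E :: "'v \<Rightarrow> 'v \<Rightarrow> bool" and ord :: "'v \<Rightarrow> nat"
    and u :: "'v letter list set"
  assumes "labeled_graph V E"
    and "\<forall>v\<in>V. dir_indec_cyclic_order (ord v)"
    and "u \<in> carrier (graph_product V E ord)"
    and "CP_element V E ord u"
  shows "centralizer (graph_product V E ord) u = gp_sub V E ord (gp_st V E ord u)"
proof -
  interpret graph_product_words V E ord
    using assms(1) unfolding labeled_graph_def by unfold_locales blast+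
  obtain y where y: "y \<in> words" "u = cls y" using carrier_cls[OF assms(3)] by blast
  define U where "U = act y []"
  have U: "normal U" "verts U \<subseteq> V" "weq (expand U) y"
    using normal_form[OF y(1)] y(1) unfolding U_def lists_letters_iff by blast+
  have u: "u = cls (expand U)" using y cls_eq[OF y(1)] weq_sym[OF U(3)] by simp
  have supp: "gp_supp V E ord u = verts U" using supp_normal[OF U(1,2)] u by simp
  obtain D z where D: "complete_subgraph V E D" "z \<in> lists (letters D)" "u = cls z"
    using assms(4) unfolding CP_element_def gp_sub_def by blast
  have "verts U \<subseteq> D" using supp_subset[OF D(2)] supp D(3) by simp
  then have clique: "complete_subgraph V E (verts U)"
    using D(1) U(2) unfolding complete_subgraph_def by blast
  have "gp_st V E ord u = star (verts U)" unfolding gp_st_def star_def supp ..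
  then show ?thesis using centralizer_clique_normal[OF U(1) clique] u by simp
qed

end
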